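(* The closure of the circuit graph, $\operatorname{cl}G_X(\mathcal{A})$, contains no lines.
   Context: $X\subset\mathbb{R}^n$ is a nonempty closed convex set and $\mathcal{A}\subset\mathbb{R}^n$ is a nonempty finite set such that the functions $x\mapsto\exp(\alpha^Tx)$, $\alpha\in\mathcal{A}$, are linearly independent on $X$. $\mathbb{R}^{\mathcal{A}}$ denotes real vectors indexed by $\mathcal{A}$. $\mathcal{A}\nu=\sum_\alpha\alpha\nu_\alpha$. $\sigma_X(y)=\sup\{y^Tx:x\in X\}$. $N_\beta=\{\nu\in\mathbb{R}^{\mathcal{A}}:\nu_\alpha\ge0\ \forall\alpha\neq\beta,\ \sum_\alpha\nu_\alpha=0\}$. A vector $\nu^\star\in N_\beta$ is an $X$-circuit of $\mathcal{A}$ if (1) $\nu^\star\neq0$, (2) $\sigma_X(-\mathcal{A}\nu^\star)<\infty$, and (3) $\nu^\star$ cannot be written as a convex combination of two non-proportional vectors $\nu^{(1)},\nu^{(2)}\in N_\beta$ such that the map $\nu\mapsto\sigma_X(-\mathcal{A}\nu)$ is affine on the segment $[\nu^{(1)},\nu^{(2)}]$. $\Lambda_X(\mathcal{A})$ is the set of all $X$-circuits $\lambda$ (over all $\beta\in\mathcal{A}$) normalized so that the unique negative entry equals $-1$. The functional form of $\lambda\in\Lambda_X(\mathcal{A})$ is $\phi_\lambda=(\lambda,\sigma_X(-\mathcal{A}\lambda))\in\mathbb{R}^{\mathcal{A}}\times\mathbb{R}$. The circuit graph is $G_X(\mathcal{A})=\operatorname{cone}(\{\phi_\lambda:\lambda\in\Lambda_X(\mathcal{A})\}\cup\{(0,1)\})\subset\mathbb{R}^{\mathcal{A}}\times\mathbb{R}$.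 *)

theory Defs
  imports "HOL-Analysis.Analysis"
begin

(* Vectors in R^A are modelled as functions  real^'n => real  that vanish off A. *)

definition supp_fun :: "(real^'n) set \<Rightarrow> real^'n \<Rightarrow> ereal" where
  "supp_fun X y = (SUP x\<in>X. ereal (y \<bullet> x))"

definition Amul :: "(real^'n) set \<Rightarrow> (real^'n \<Rightarrow> real) \<Rightarrow> real^'n" where
  "Amul A \<nu> = (\<Sum>\<alpha>\<in>A. \<nu> \<alpha> *\<^sub>R \<alpha>)"

definition exp_lin_indep :: "(real^'n) set \<Rightarrow> (real^'n) set \<Rightarrow> bool" where
  "exp_lin_indep X A \<longleftrightarrow>
     (\<forall>c :: real^'n \<Rightarrow> real. (\<forall>x\<in>X. (\<Sum>\<alpha>\<in>A. c \<alpha> * exp (\<alpha> \<bullet> x)) = 0) \<longrightarrow> (\<forall>\<alpha>\<in>A. c \<alpha> = 0))"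

definition Nset :: "(real^'n) set \<Rightarrow> real^'n \<Rightarrow> (real^'n \<Rightarrow> real) set" where
  "Nset A \<beta> = {\<nu>. (\<forall>\<alpha>. \<alpha> \<notin> A \<longrightarrow> \<nu> \<alpha> = 0) \<and> (\<forall>\<alpha>\<in>A. \<alpha> \<noteq> \<beta> \<longrightarrow> \<nu> \<alpha> \<ge> 0)
                  \<and> (\<Sum>\<alpha>\<in>A. \<nu> \<alpha>) = 0}"

definition sigA :: "(real^'n) set \<Rightarrow> (real^'n) set \<Rightarrow> (real^'n \<Rightarrow> real) \<Rightarrow> ereal" where
  "sigA X A \<nu> = supp_fun X (- Amul A \<nu>)"

definition affine_on_seg :: "(real^'n) set \<Rightarrow> (real^'n) set \<Rightarrow> (real^'n \<Rightarrow> real) \<Rightarrow> (real^'n \<Rightarrow> real) \<Rightarrow> bool" where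
  "affine_on_seg X A \<nu>1 \<nu>2 \<longleftrightarrow>
     sigA X A \<nu>1 \<noteq> \<infinity> \<and> sigA X A \<nu>1 \<noteq> - \<infinity> \<and> sigA X A \<nu>2 \<noteq> \<infinity> \<and> sigA X A \<nu>2 \<noteq> - \<infinity> \<and>
     (\<forall>t\<in>{0..1::real}. sigA X A (\<lambda>\<alpha>. (1 - t) * \<nu>1 \<alpha> + t * \<nu>2 \<alpha>)
         = ereal ((1 - t) * real_of_ereal (sigA X A \<nu>1) + t * real_of_ereal (sigA X A \<nu>2)))"

definition proportional :: "('a \<Rightarrow> real) \<Rightarrow> ('a \<Rightarrow> real) \<Rightarrow> bool" where
  "proportional u v \<longleftrightarrow> (\<exists>c. u = (\<lambda>a. c * v a)) \<or> (\<exists>c. v = (\<lambda>a. c * u a))"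

definition X_circuit :: "(real^'n) set \<Rightarrow> (real^'n) set \<Rightarrow> real^'n \<Rightarrow> (real^'n \<Rightarrow> real) \<Rightarrow> bool" where
  "X_circuit X A \<beta> \<nu> \<longleftrightarrow> \<nu> \<in> Nset A \<beta> \<and> \<nu> \<noteq> (\<lambda>_. 0) \<and> sigA X A \<nu> < \<infinity> \<and>
     \<not> (\<exists>\<nu>1 \<nu>2 \<theta>. \<nu>1 \<in> Nset A \<beta> \<and> \<nu>2 \<in> Nset A \<beta> \<and> \<not> proportional \<nu>1 \<nu>2 \<and>
          \<theta> \<in> {0<..<1::real} \<and> \<nu> = (\<lambda>\<alpha>. \<theta> * \<nu>1 \<alpha> + (1 - \<theta>) * \<nu>2 \<alpha>) \<and>
          affine_on_seg X A \<nu>1 \<nu>2)"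

definition Lambda_X :: "(real^'n) set \<Rightarrow> (real^'n) set \<Rightarrow> (real^'n \<Rightarrow> real) set" where
  "Lambda_X X A = {l. \<exists>\<beta>\<in>A. X_circuit X A \<beta> l \<and> l \<beta> = -1}"

definition phi :: "(real^'n) set \<Rightarrow> (real^'n) set \<Rightarrow> (real^'n \<Rightarrow> real) \<Rightarrow> (real^'n \<Rightarrow> real) \<times> real" where
  "phi X A l = (l, real_of_ereal (sigA X A l))"

definition cone_gen :: "(('a \<Rightarrow> real) \<times> real) set \<Rightarrow> (('a \<Rightarrow> real) \<times> real) set" where
  "cone_gen S = {((\<lambda>\<alpha>. \<Sum>i<(k::nat). c i * fst (v i) \<alpha>), (\<Sum>i<k. c i * snd (v i))) | k c v.
                   \<forall>i<k. c i \<ge> 0 \<and> v i \<in> S}"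

definition circuit_graph :: "(real^'n) set \<Rightarrow> (real^'n) set \<Rightarrow> ((real^'n \<Rightarrow> real) \<times> real) set" where
  "circuit_graph X A = cone_gen (phi X A ` Lambda_X X A \<union> {((\<lambda>_. 0), 1)})"

definition contains_line :: "(('a \<Rightarrow> real) \<times> real) set \<Rightarrow> bool" where
  "contains_line S \<longleftrightarrow> (\<exists>p d. d \<noteq> ((\<lambda>_. 0), 0) \<and>
      (\<forall>t::real. ((\<lambda>a. fst p a + t * fst d a), snd p + t * snd d) \<in> S))"

end

theory Submission
  imports Defs
begin

text \<open>
  The circuit graph lies in a cone \<open>{p. \<epsilon> \<parallel>p\<parallel>\<^sub>1 \<le> F p}\<close> with \<open>\<epsilon> > 0\<close> and \<open>F\<close> linear, and
  such a cone is closed and contains no line. \<open>F\<close> is built from a finite sample \<open>Y \<subseteq> X\<close> containing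
  \<open>x\<^sub>0\<close> on which distinct exponents are separated, \<open>\<Sum>\<^sub>x\<^sub>\<in>\<^sub>Y ((\<alpha> - \<gamma>)\<^sup>T(x - x\<^sub>0))\<^sup>2 \<ge> \<mu> > 0\<close>
  (this is where linear independence of the exponentials enters). At \<open>\<phi>\<^sub>\<lambda>\<close> it equals
  \<open>K D + \<Sum>\<^sub>x\<^sub>\<in>\<^sub>Y \<Sum>\<^sub>\<alpha> \<lambda>\<^sub>\<alpha> (\<alpha>\<^sup>T(x - x\<^sub>0))\<^sup>2\<close>, where \<open>D \<ge> 0\<close> is the sum over \<open>Y\<close> of the slacks
  \<open>\<sigma>\<^sub>X(-\<A>\<lambda>) + \<lambda>\<^sup>T\<A>\<^sup>Tx\<close>. As \<open>\<lambda>\<close> sums to zero with the single negative entry \<open>-1\<close>, the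
  quadratic term is at least \<open>\<mu>\<close> minus a fixed multiple of \<open>D\<close>; for large \<open>K\<close> this gives
  \<open>F \<phi>\<^sub>\<lambda> \<ge> D + \<mu>\<close>, while \<open>\<parallel>\<phi>\<^sub>\<lambda>\<parallel>\<^sub>1 = |\<sigma>\<^sub>X(-\<A>\<lambda>)| + 2 \<le> D + const\<close>.
\<close>

section \<open>Cones dominating the \<open>\<ell>\<^sub>1\<close>-norm\<close>

definition abs_sum_on :: "'a set \<Rightarrow> ('a \<Rightarrow> real) \<times> real \<Rightarrow> real" where
  "abs_sum_on A p = \<bar>snd p\<bar> + (\<Sum>\<alpha>\<in>A. \<bar>fst p \<alpha>\<bar>)"

definition lin_form_on :: "real \<Rightarrow> ('a \<Rightarrow> real) \<Rightarrow> 'a set \<Rightarrow> ('a \<Rightarrow> real) \<times> real \<Rightarrow> real" where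
  "lin_form_on c0 w A p = c0 * snd p + (\<Sum>\<alpha>\<in>A. fst p \<alpha> * w \<alpha>)"

definition dominated_cone :: "real \<Rightarrow> real \<Rightarrow> ('a \<Rightarrow> real) \<Rightarrow> 'a set \<Rightarrow> (('a \<Rightarrow> real) \<times> real) set" where
  "dominated_cone \<epsilon> c0 w A =
     {p. \<epsilon> * abs_sum_on A p \<le> lin_form_on c0 w A p \<and> (\<forall>\<alpha>. \<alpha> \<notin> A \<longrightarrow> fst p \<alpha> = 0)}"

definition line_point :: "('a \<Rightarrow> real) \<times> real \<Rightarrow> ('a \<Rightarrow> real) \<times> real \<Rightarrow> real \<Rightarrow> ('a \<Rightarrow> real) \<times> real" where
  "line_point p d t = ((\<lambda>a. fst p a + t * fst d a), snd p + t * snd d)"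

lemma contains_line_iff:
  "contains_line S \<longleftrightarrow> (\<exists>p d. d \<noteq> ((\<lambda>_. 0), 0) \<and> range (line_point p d) \<subseteq> S)"
  unfolding contains_line_def line_point_def by blast

lemma contains_line_mono: "contains_line S \<Longrightarrow> S \<subseteq> T \<Longrightarrow> contains_line T"
  unfolding contains_line_iff by blast

lemma cone_gen_subset_dominated_cone:
  assumes "finite A" "\<epsilon> \<ge> 0" "S \<subseteq> dominated_cone \<epsilon> c0 w A"
  shows "cone_gen S \<subseteq> dominated_cone \<epsilon> c0 w A"
proof
  fix q assume "q \<in> cone_gen S"
  then obtain k c v where q: "q = ((\<lambda>\<alpha>. \<Sum>i<(k::nat). c i * fst (v i) \<alpha>), (\<Sum>i<k. c i * snd (v i)))"
    and cv: "\<forall>i<k. c i \<ge> 0 \<and> v i \<in> S"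
    unfolding cone_gen_def by blast
  have v: "\<epsilon> * abs_sum_on A (v i) \<le> lin_form_on c0 w A (v i)" "\<forall>\<alpha>. \<alpha> \<notin> A \<longrightarrow> fst (v i) \<alpha> = 0"
    if "i < k" for i
    using cv that assms(3) unfolding dominated_cone_def by auto
  have F: "lin_form_on c0 w A q = (\<Sum>i<k. c i * lin_form_on c0 w A (v i))"
    unfolding q lin_form_on_def
    by (simp add: sum_distrib_left sum_distrib_right sum.distrib algebra_simps sum.swap[of _ A])
  have "abs_sum_on A q \<le> (\<Sum>i<k. c i * abs_sum_on A (v i))"
  proof -
    have "\<bar>\<Sum>i<k. c i * snd (v i)\<bar> \<le> (\<Sum>i<k. c i * \<bar>snd (v i)\<bar>)"
      using cv by (auto intro: order_trans[OF sum_abs] simp: abs_mult)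
    moreover have "(\<Sum>\<alpha>\<in>A. \<bar>\<Sum>i<k. c i * fst (v i) \<alpha>\<bar>) \<le> (\<Sum>\<alpha>\<in>A. \<Sum>i<k. c i * \<bar>fst (v i) \<alpha>\<bar>)"
      using cv by (auto intro!: sum_mono order_trans[OF sum_abs] simp: abs_mult)
    ultimately show ?thesis unfolding q abs_sum_on_def
      by (simp add: sum_distrib_left sum.distrib algebra_simps sum.swap[of _ A])
  qed
  hence "\<epsilon> * abs_sum_on A q \<le> \<epsilon> * (\<Sum>i<k. c i * abs_sum_on A (v i))"
    using assms(2) by (rule mult_left_mono)
  also have "\<dots> = (\<Sum>i<k. c i * (\<epsilon> * abs_sum_on A (v i)))"
    by (simp add: sum_distrib_left algebra_simps)
  also have "\<dots> \<le> lin_form_on c0 w A q"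
    unfolding F using cv v by (auto intro!: sum_mono mult_left_mono)
  finally show "q \<in> dominated_cone \<epsilon> c0 w A"
    unfolding dominated_cone_def using v(2) by (auto simp: q)
qed

lemma continuous_on_coordinate: "continuous_on UNIV (\<lambda>p::('a \<Rightarrow> real) \<times> real. fst p \<alpha>)"
  by (rule continuous_on_product_then_coordinatewise[OF continuous_on_fst[OF continuous_on_id]])

lemma closed_dominated_cone:
  assumes "finite A"
  shows "closed (dominated_cone \<epsilon> c0 w A)"
proof -
  have "dominated_cone \<epsilon> c0 w A
     = {p. \<epsilon> * abs_sum_on A p \<le> lin_form_on c0 w A p} \<inter> (\<Inter>\<alpha>\<in>-A. {p. fst p \<alpha> = 0})"
    unfolding dominated_cone_def by auto
  moreover have "closed {p::('a \<Rightarrow> real) \<times> real. \<epsilon> * abs_sum_on A p \<le> lin_form_on c0 w A p}"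
    unfolding abs_sum_on_def lin_form_on_def
    by (intro closed_Collect_le continuous_intros continuous_on_coordinate)
  moreover have "closed (\<Inter>\<alpha>\<in>-A. {p::('a \<Rightarrow> real) \<times> real. fst p \<alpha> = 0})"
    by (intro closed_INT ballI closed_Collect_eq continuous_on_coordinate continuous_on_const)
  ultimately show ?thesis by (simp add: closed_Int)
qed

lemma abs_sum_on_line_point_ge:
  "\<bar>t\<bar> * abs_sum_on A d - abs_sum_on A p \<le> abs_sum_on A (line_point p d t)"
proof -
  have abs_lin: "\<bar>t\<bar> * \<bar>y\<bar> - \<bar>x\<bar> \<le> \<bar>x + t * y\<bar>" for x y :: real
    by (simp add: abs_mult flip: abs_minus_commute)
  have "(\<Sum>\<alpha>\<in>A. \<bar>t\<bar> * \<bar>fst d \<alpha>\<bar> - \<bar>fst p \<alpha>\<bar>) \<le> (\<Sum>\<alpha>\<in>A. \<bar>fst p \<alpha> + t * fst d \<alpha>\<bar>)"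
    by (intro sum_mono abs_lin)
  with abs_lin[where x="snd p" and y="snd d"] show ?thesis
    unfolding abs_sum_on_def line_point_def by (simp add: sum_subtractf sum_distrib_left algebra_simps)
qed

lemma lin_form_on_line_point:
  "lin_form_on c0 w A (line_point p d t) = lin_form_on c0 w A p + t * lin_form_on c0 w A d"
  unfolding lin_form_on_def line_point_def by (simp add: algebra_simps sum.distrib sum_distrib_left)

lemma dominated_cone_no_line:
  assumes "finite A" "\<epsilon> > 0"
  shows "\<not> contains_line (dominated_cone \<epsilon> c0 w A)"
proof
  assume "contains_line (dominated_cone \<epsilon> c0 w A)"
  then obtain p d where "d \<noteq> ((\<lambda>_. 0), 0)" and line: "range (line_point p d) \<subseteq> dominated_cone \<epsilon> c0 w A"
    unfolding contains_line_iff by blast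
  let ?N = "abs_sum_on A" and ?F = "lin_form_on c0 w A"
  have dom: "\<epsilon> * ?N (line_point p d t) \<le> ?F p + t * ?F d" for t
  proof -
    have "line_point p d t \<in> dominated_cone \<epsilon> c0 w A" using line by blast
    then show ?thesis by (simp add: dominated_cone_def lin_form_on_line_point)
  qed
  have "line_point p d 0 \<in> dominated_cone \<epsilon> c0 w A" "line_point p d 1 \<in> dominated_cone \<epsilon> c0 w A"
    using line by blast+
  then have supp: "\<alpha> \<notin> A \<Longrightarrow> fst d \<alpha> = 0" for \<alpha>
    by (auto simp: dominated_cone_def line_point_def)
  have Nd: "?N d > 0"
  proof (rule ccontr)
    assume "\<not> ?N d > 0"
    moreover have "0 \<le> (\<Sum>\<alpha>\<in>A. \<bar>fst d \<alpha>\<bar>)" by (simp add: sum_nonneg)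
    ultimately have "snd d = 0" "(\<Sum>\<alpha>\<in>A. \<bar>fst d \<alpha>\<bar>) = 0"
      unfolding abs_sum_on_def by linarith+
    then have "snd d = 0" "\<forall>\<alpha>\<in>A. fst d \<alpha> = 0"
      using assms(1) by (simp_all add: sum_nonneg_eq_0_iff)
    moreover have "fst d = (\<lambda>_. 0)"
      using supp \<open>\<forall>\<alpha>\<in>A. fst d \<alpha> = 0\<close> by fastforce
    ultimately have "d = ((\<lambda>_. 0), 0)"
      by (simp add: prod_eq_iff)
    with \<open>d \<noteq> ((\<lambda>_. 0), 0)\<close> show False ..
  qed
  \<comment> \<open>Going out a distance \<open>T\<close> in both directions gives \<open>\<epsilon> (T \<parallel>d\<parallel> - \<parallel>p\<parallel>) \<le> F p\<close>.\<close>
  have bound: "\<epsilon> * (T * ?N d - ?N p) \<le> ?F p" if "T \<ge> 0" for T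
  proof -
    have "\<epsilon> * (T * ?N d - ?N p) \<le> \<epsilon> * ?N (line_point p d t)" if "\<bar>t\<bar> = T" for t
      using abs_sum_on_line_point_ge[of t A d p] that assms(2) by (simp add: mult_left_mono)
    from this[of T] this[of "-T"] dom[of T] dom[of "-T"] \<open>T \<ge> 0\<close> show ?thesis
      by simp
  qed
  define T where "T = (\<bar>?F p\<bar> + \<epsilon> * ?N p + 1) / (\<epsilon> * ?N d)"
  have "\<epsilon> * (T * ?N d) = \<bar>?F p\<bar> + \<epsilon> * ?N p + 1"
    unfolding T_def using assms(2) Nd by (simp add: field_simps)
  moreover have "T \<ge> 0"
    unfolding T_def using assms(2) Nd by (simp add: abs_sum_on_def sum_nonneg)
  ultimately show False using bound[of T] by (simp add: algebra_simps)
qed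

section \<open>Normalized circuit weights\<close>

definition normalized_weight :: "'a set \<Rightarrow> 'a \<Rightarrow> ('a \<Rightarrow> real) \<Rightarrow> bool" where
  "normalized_weight A \<beta> l \<longleftrightarrow>
     \<beta> \<in> A \<and> l \<beta> = -1 \<and> (\<forall>\<alpha>\<in>A. \<alpha> \<noteq> \<beta> \<longrightarrow> 0 \<le> l \<alpha>) \<and> sum l A = 0"

lemma normalized_weight_sum_remove:
  assumes "finite A" "normalized_weight A \<beta> l"
  shows "(\<Sum>\<alpha>\<in>A - {\<beta>}. l \<alpha>) = 1"
  using assms sum.remove[OF assms(1), of \<beta> l] by (simp add: normalized_weight_def)

lemma normalized_weight_abs_sum:
  assumes "finite A" "normalized_weight A \<beta> l"
  shows "(\<Sum>\<alpha>\<in>A. \<bar>l \<alpha>\<bar>) = 2"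
proof -
  have "(\<Sum>\<alpha>\<in>A - {\<beta>}. \<bar>l \<alpha>\<bar>) = (\<Sum>\<alpha>\<in>A - {\<beta>}. l \<alpha>)"
    using assms(2) by (intro sum.cong) (auto simp: normalized_weight_def)
  then show ?thesis
    using assms normalized_weight_sum_remove[OF assms] sum.remove[OF assms(1), of \<beta> "\<lambda>\<alpha>. \<bar>l \<alpha>\<bar>"]
    by (simp add: normalized_weight_def)
qed

lemma normalized_weight_abs_le_1:
  assumes "finite A" "normalized_weight A \<beta> l" "\<alpha> \<in> A"
  shows "\<bar>l \<alpha>\<bar> \<le> 1"
proof (cases "\<alpha> = \<beta>")
  case False
  then have "l \<alpha> \<le> (\<Sum>\<alpha>\<in>A - {\<beta>}. l \<alpha>)"
    using assms by (intro member_le_sum) (auto simp: normalized_weight_def)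
  with False assms show ?thesis
    by (simp add: normalized_weight_sum_remove normalized_weight_def)
qed (use assms in \<open>simp add: normalized_weight_def\<close>)

lemma normalized_weight_sum_ge:
  assumes "finite A" "normalized_weight A \<beta> l" "q \<beta> = 0"
    and "\<And>\<alpha>. \<alpha> \<in> A \<Longrightarrow> \<alpha> \<noteq> \<beta> \<Longrightarrow> \<mu> \<le> q \<alpha>"
  shows "\<mu> \<le> (\<Sum>\<alpha>\<in>A. l \<alpha> * q \<alpha>)"
proof -
  have "\<mu> = (\<Sum>\<alpha>\<in>A - {\<beta>}. l \<alpha> * \<mu>)"
    using normalized_weight_sum_remove[OF assms(1,2)] by (simp flip: sum_distrib_right)
  also have "\<dots> \<le> (\<Sum>\<alpha>\<in>A - {\<beta>}. l \<alpha> * q \<alpha>)"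
    using assms(2,4) by (intro sum_mono mult_left_mono) (auto simp: normalized_weight_def)
  also have "\<dots> = (\<Sum>\<alpha>\<in>A. l \<alpha> * q \<alpha>)"
    using assms(1-3) sum.remove[OF assms(1), of \<beta> "\<lambda>\<alpha>. l \<alpha> * q \<alpha>"]
    by (simp add: normalized_weight_def)
  finally show ?thesis .
qed

lemma sum_weighted_square_shift:
  fixes l a :: "'a \<Rightarrow> real"
  assumes "sum l A = 0"
  shows "(\<Sum>\<alpha>\<in>A. l \<alpha> * (a \<alpha>)\<^sup>2) = (\<Sum>\<alpha>\<in>A. l \<alpha> * (a \<alpha> - b)\<^sup>2) + 2 * b * (\<Sum>\<alpha>\<in>A. l \<alpha> * a \<alpha>)"
proof -
  have "(\<Sum>\<alpha>\<in>A. l \<alpha> * (a \<alpha> - b)\<^sup>2)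
      = (\<Sum>\<alpha>\<in>A. l \<alpha> * (a \<alpha>)\<^sup>2) - 2 * b * (\<Sum>\<alpha>\<in>A. l \<alpha> * a \<alpha>) + b\<^sup>2 * sum l A"
    by (simp add: power2_eq_square algebra_simps sum.distrib sum_subtractf sum_distrib_left sum_distrib_right)
  with assms show ?thesis by simp
qed

lemma sum_mult_diff_ge:
  fixes c d :: "'b \<Rightarrow> real"
  assumes "finite Y" "x0 \<in> Y" "\<And>x. x \<in> Y \<Longrightarrow> \<bar>c x\<bar> \<le> R" "\<And>x. x \<in> Y \<Longrightarrow> 0 \<le> d x"
  shows "- (R * (1 + real (card Y)) * sum d Y) \<le> (\<Sum>x\<in>Y. c x * (d x - d x0))"
proof -
  have R: "0 \<le> R" using assms(2,3) by force
  have dx0: "d x0 \<le> sum d Y"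
    using assms by (intro member_le_sum) auto
  have "- (R * (1 + real (card Y)) * sum d Y) \<le> - (R * (sum d Y + real (card Y) * d x0))"
    using mult_left_mono[OF mult_right_mono[OF dx0, of "real (card Y)"] R] by (simp add: algebra_simps)
  also have "\<dots> = (\<Sum>x\<in>Y. - (R * (d x + d x0)))"
    by (simp add: sum_negf sum.distrib flip: sum_distrib_left)
  also have "\<dots> \<le> (\<Sum>x\<in>Y. c x * (d x - d x0))"
  proof (rule sum_mono)
    fix x assume "x \<in> Y"
    then have "\<bar>c x * (d x - d x0)\<bar> \<le> R * (d x + d x0)"
      unfolding abs_mult using assms R by (intro mult_mono) (auto simp: abs_le_iff)
    then show "- (R * (d x + d x0)) \<le> c x * (d x - d x0)" by (simp add: abs_le_iff)
  qed
  finally show ?thesis .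
qed

lemma normalized_weight_quadratic_ge:
  fixes l :: "'a \<Rightarrow> real" and f :: "'a \<Rightarrow> 'b \<Rightarrow> real"
  assumes "finite A" "finite Y" "x0 \<in> Y" "normalized_weight A \<beta> l"
    and slack: "\<And>x. x \<in> Y \<Longrightarrow> 0 \<le> s + (\<Sum>\<alpha>\<in>A. l \<alpha> * f \<alpha> x)"
    and sep: "\<And>\<alpha>. \<alpha> \<in> A \<Longrightarrow> \<alpha> \<noteq> \<beta> \<Longrightarrow> \<mu> \<le> (\<Sum>x\<in>Y. (f \<alpha> x - f \<alpha> x0 - (f \<beta> x - f \<beta> x0))\<^sup>2)"
  defines "R \<equiv> \<Sum>\<alpha>\<in>A. \<Sum>x\<in>Y. \<bar>f \<alpha> x - f \<alpha> x0\<bar>"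
  shows "\<mu> - 2 * R * (1 + real (card Y)) * (\<Sum>x\<in>Y. s + (\<Sum>\<alpha>\<in>A. l \<alpha> * f \<alpha> x))
    \<le> (\<Sum>x\<in>Y. \<Sum>\<alpha>\<in>A. l \<alpha> * (f \<alpha> x - f \<alpha> x0)\<^sup>2)"
proof -
  define a where "a \<alpha> x = f \<alpha> x - f \<alpha> x0" for \<alpha> x
  define d where "d x = s + (\<Sum>\<alpha>\<in>A. l \<alpha> * f \<alpha> x)" for x
  have lsum: "sum l A = 0" and "\<beta> \<in> A"
    using assms(4) by (auto simp: normalized_weight_def)
  \<comment> \<open>Since \<open>\<lambda>\<close> sums to zero, centring the squares at \<open>a \<beta> x\<close> only produces a term linear in the slacks.\<close>
  have centre: "(\<Sum>\<alpha>\<in>A. l \<alpha> * (a \<alpha> x)\<^sup>2)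
      = (\<Sum>\<alpha>\<in>A. l \<alpha> * (a \<alpha> x - a \<beta> x)\<^sup>2) + 2 * (a \<beta> x * (d x - d x0))" for x
  proof -
    have "(\<Sum>\<alpha>\<in>A. l \<alpha> * a \<alpha> x) = d x - d x0"
      unfolding a_def d_def by (simp add: algebra_simps sum_subtractf)
    then show ?thesis using sum_weighted_square_shift[OF lsum, of "\<lambda>\<alpha>. a \<alpha> x" "a \<beta> x"] by simp
  qed
  have "\<mu> \<le> (\<Sum>\<alpha>\<in>A. l \<alpha> * (\<Sum>x\<in>Y. (a \<alpha> x - a \<beta> x)\<^sup>2))"
    using sep unfolding a_def by (intro normalized_weight_sum_ge[OF assms(1,4)]) auto
  also have "\<dots> = (\<Sum>x\<in>Y. \<Sum>\<alpha>\<in>A. l \<alpha> * (a \<alpha> x - a \<beta> x)\<^sup>2)"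
    by (simp add: sum_distrib_left sum.swap[of _ Y])
  finally have quad: "\<mu> \<le> (\<Sum>x\<in>Y. \<Sum>\<alpha>\<in>A. l \<alpha> * (a \<alpha> x - a \<beta> x)\<^sup>2)" .
  have "\<bar>a \<beta> x\<bar> \<le> R" if "x \<in> Y" for x
  proof -
    have "\<bar>a \<beta> x\<bar> \<le> (\<Sum>x\<in>Y. \<bar>a \<beta> x\<bar>)"
      using that assms(2) by (intro member_le_sum) auto
    also have "\<dots> \<le> R"
      unfolding R_def a_def using \<open>\<beta> \<in> A\<close> assms(1) by (intro member_le_sum) (auto simp: sum_nonneg)
    finally show ?thesis .
  qed
  then have lin: "- (R * (1 + real (card Y)) * sum d Y) \<le> (\<Sum>x\<in>Y. a \<beta> x * (d x - d x0))"
    using slack unfolding d_def by (intro sum_mult_diff_ge assms(2,3))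
  have "\<mu> - 2 * R * (1 + real (card Y)) * sum d Y
    \<le> (\<Sum>x\<in>Y. \<Sum>\<alpha>\<in>A. l \<alpha> * (a \<alpha> x - a \<beta> x)\<^sup>2) + 2 * (\<Sum>x\<in>Y. a \<beta> x * (d x - d x0))"
    using quad lin by linarith
  also have "\<dots> = (\<Sum>x\<in>Y. \<Sum>\<alpha>\<in>A. l \<alpha> * (a \<alpha> x)\<^sup>2)"
    by (simp add: centre sum.distrib sum_distrib_left)
  finally show ?thesis unfolding a_def d_def .
qed

lemma normalized_weight_dominated:
  fixes l :: "'a \<Rightarrow> real" and f :: "'a \<Rightarrow> 'b \<Rightarrow> real"
  assumes "finite A" "finite Y" "x0 \<in> Y" "normalized_weight A \<beta> l" "\<mu> > 0"
    and slack: "\<And>x. x \<in> Y \<Longrightarrow> 0 \<le> s + (\<Sum>\<alpha>\<in>A. l \<alpha> * f \<alpha> x)"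
    and sep: "\<And>\<alpha>. \<alpha> \<in> A \<Longrightarrow> \<alpha> \<noteq> \<beta> \<Longrightarrow> \<mu> \<le> (\<Sum>x\<in>Y. (f \<alpha> x - f \<alpha> x0 - (f \<beta> x - f \<beta> x0))\<^sup>2)"
  defines "K \<equiv> 2 * (\<Sum>\<alpha>\<in>A. \<Sum>x\<in>Y. \<bar>f \<alpha> x - f \<alpha> x0\<bar>) * (1 + real (card Y)) + 1"
    and "\<epsilon> \<equiv> min 1 (\<mu> / ((\<Sum>\<alpha>\<in>A. \<bar>f \<alpha> x0\<bar>) + 2))"
  shows "\<epsilon> * (\<bar>s\<bar> + (\<Sum>\<alpha>\<in>A. \<bar>l \<alpha>\<bar>))
    \<le> K * real (card Y) * s + (\<Sum>\<alpha>\<in>A. l \<alpha> * (K * (\<Sum>x\<in>Y. f \<alpha> x) + (\<Sum>x\<in>Y. (f \<alpha> x - f \<alpha> x0)\<^sup>2)))"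
proof -
  define d where "d x = s + (\<Sum>\<alpha>\<in>A. l \<alpha> * f \<alpha> x)" for x
  define D where "D = sum d Y"
  define R0 where "R0 = (\<Sum>\<alpha>\<in>A. \<bar>f \<alpha> x0\<bar>)"
  have "0 \<le> d x0" "d x0 \<le> D"
    using slack assms(2,3) unfolding D_def d_def by (auto intro: member_le_sum)
  have "\<bar>\<Sum>\<alpha>\<in>A. l \<alpha> * f \<alpha> x0\<bar> \<le> R0"
    unfolding R0_def using normalized_weight_abs_le_1[OF assms(1,4)]
    by (intro order_trans[OF sum_abs] sum_mono) (simp add: abs_mult mult_left_le_one_le)
  then have s_le: "\<bar>s\<bar> \<le> D + R0"
    using \<open>0 \<le> d x0\<close> \<open>d x0 \<le> D\<close> unfolding d_def by linarith
  have "K * real (card Y) * s + (\<Sum>\<alpha>\<in>A. l \<alpha> * (K * (\<Sum>x\<in>Y. f \<alpha> x) + (\<Sum>x\<in>Y. (f \<alpha> x - f \<alpha> x0)\<^sup>2)))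
      = K * D + (\<Sum>x\<in>Y. \<Sum>\<alpha>\<in>A. l \<alpha> * (f \<alpha> x - f \<alpha> x0)\<^sup>2)"
    unfolding D_def d_def
    by (simp add: sum.distrib sum_distrib_left sum_distrib_right algebra_simps sum.swap[of _ A])
  also have "\<dots> \<ge> D + \<mu>"
    using normalized_weight_quadratic_ge[OF assms(1-4) slack sep] unfolding K_def D_def d_def
    by (simp add: algebra_simps)
  moreover have "\<epsilon> * (\<bar>s\<bar> + 2) \<le> D + \<mu>"
  proof -
    have "0 \<le> R0" unfolding R0_def by (simp add: sum_nonneg)
    then have "\<epsilon> \<le> \<mu> / (R0 + 2)" "0 \<le> \<epsilon>" "\<epsilon> \<le> 1"
      unfolding \<epsilon>_def R0_def[symmetric] using \<open>\<mu> > 0\<close> by auto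
    with \<open>0 \<le> R0\<close> have "\<epsilon> * (R0 + 2) \<le> \<mu>" "0 \<le> \<epsilon>" "\<epsilon> \<le> 1"
      by (simp_all add: pos_le_divide_eq)
    moreover have "0 \<le> D" using \<open>0 \<le> d x0\<close> \<open>d x0 \<le> D\<close> by linarith
    ultimately show ?thesis
      using mult_left_mono[OF s_le \<open>0 \<le> \<epsilon>\<close>] mult_right_mono[OF \<open>\<epsilon> \<le> 1\<close> \<open>0 \<le> D\<close>]
      by (simp add: algebra_simps)
  qed
  ultimately show ?thesis
    unfolding normalized_weight_abs_sum[OF assms(1,4)] by linarith
qed

section \<open>Circuits of exponents with independent exponentials\<close>

lemma exp_lin_indep_separates:
  assumes "exp_lin_indep X A" "finite A" "\<alpha> \<in> A" "\<gamma> \<in> A" "\<alpha> \<noteq> \<gamma>" "x0 \<in> X"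
  shows "\<exists>x\<in>X. (\<alpha> - \<gamma>) \<bullet> x \<noteq> (\<alpha> - \<gamma>) \<bullet> x0"
proof (rule ccontr)
  assume "\<not> ?thesis"
  then have const: "\<alpha> \<bullet> x = (\<alpha> - \<gamma>) \<bullet> x0 + \<gamma> \<bullet> x" if "x \<in> X" for x
    using that by (auto simp: inner_diff_left)
  \<comment> \<open>Then \<open>exp (\<alpha>\<^sup>Tx) - exp ((\<alpha> - \<gamma>)\<^sup>Tx\<^sub>0) exp (\<gamma>\<^sup>Tx)\<close> vanishes on \<open>X\<close>.\<close>
  define c where "c z = (if z = \<alpha> then 1 else if z = \<gamma> then - exp ((\<alpha> - \<gamma>) \<bullet> x0) else 0)" for z
  have "(\<Sum>z\<in>A. c z * exp (z \<bullet> x)) = 0" if "x \<in> X" for x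
  proof -
    have "(\<Sum>z\<in>A. c z * exp (z \<bullet> x)) = (\<Sum>z\<in>{\<alpha>, \<gamma>}. c z * exp (z \<bullet> x))"
      using assms(2-4) by (intro sum.mono_neutral_right) (auto simp: c_def)
    also have "\<dots> = 0"
      using assms(5) const[OF that] by (simp add: c_def exp_add)
    finally show ?thesis .
  qed
  then have "c \<alpha> = 0"
    using assms(1,3) unfolding exp_lin_indep_def by blast
  then show False by (simp add: c_def)
qed

lemma finite_sample_separating:
  fixes g :: "'i \<Rightarrow> 'x \<Rightarrow> real"
  assumes "finite I" "\<And>i. i \<in> I \<Longrightarrow> \<exists>x\<in>X. g i x \<noteq> 0" "z \<in> X"
  shows "\<exists>Y \<mu>. finite Y \<and> Y \<subseteq> X \<and> z \<in> Y \<and> \<mu> > 0 \<and> (\<forall>i\<in>I. \<mu> \<le> (\<Sum>x\<in>Y. (g i x)\<^sup>2))"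
proof -
  obtain pt where pt: "\<And>i. i \<in> I \<Longrightarrow> pt i \<in> X \<and> g i (pt i) \<noteq> 0"
    using assms(2) by metis
  define Y where "Y = insert z (pt ` I)"
  define \<mu> where "\<mu> = Min (insert 1 ((\<lambda>i. \<Sum>x\<in>Y. (g i x)\<^sup>2) ` I))"
  have "finite Y" "Y \<subseteq> X" "z \<in> Y"
    unfolding Y_def using assms(1,3) pt by auto
  have pos: "0 < (\<Sum>x\<in>Y. (g i x)\<^sup>2)" if "i \<in> I" for i
  proof -
    have "0 < (g i (pt i))\<^sup>2" using pt[OF that] by simp
    also have "\<dots> \<le> (\<Sum>x\<in>Y. (g i x)\<^sup>2)"
      using \<open>finite Y\<close> that unfolding Y_def by (intro member_le_sum) auto
    finally show ?thesis .
  qed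
  have "\<mu> > 0" "\<forall>i\<in>I. \<mu> \<le> (\<Sum>x\<in>Y. (g i x)\<^sup>2)"
    unfolding \<mu>_def using assms(1) pos by (auto simp: Min_gr_iff)
  with \<open>finite Y\<close> \<open>Y \<subseteq> X\<close> \<open>z \<in> Y\<close> show ?thesis by blast
qed

lemma sigA_ge_eval:
  assumes "x \<in> X" "sigA X A l < \<infinity>"
  shows "0 \<le> real_of_ereal (sigA X A l) + (\<Sum>\<alpha>\<in>A. l \<alpha> * (\<alpha> \<bullet> x))"
proof -
  have le: "ereal ((- Amul A l) \<bullet> x) \<le> sigA X A l"
    unfolding sigA_def supp_fun_def using assms(1) by (rule SUP_upper)
  then have "(- Amul A l) \<bullet> x \<le> real_of_ereal (sigA X A l)"
    using assms(2) by (cases "sigA X A l") auto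
  moreover have "(- Amul A l) \<bullet> x = - (\<Sum>\<alpha>\<in>A. l \<alpha> * (\<alpha> \<bullet> x))"
    unfolding Amul_def by (simp add: inner_sum_left)
  ultimately show ?thesis by linarith
qed

lemma Lambda_X_normalized_weight:
  assumes "l \<in> Lambda_X X A"
  obtains \<beta> where "normalized_weight A \<beta> l" "sigA X A l < \<infinity>" "\<forall>\<alpha>. \<alpha> \<notin> A \<longrightarrow> l \<alpha> = 0"
  using assms unfolding Lambda_X_def X_circuit_def Nset_def normalized_weight_def by blast

lemma exp_lin_indep_separating_sample:
  assumes "exp_lin_indep X A" "finite A" "x0 \<in> X"
  shows "\<exists>Y \<mu>. finite Y \<and> Y \<subseteq> X \<and> x0 \<in> Y \<and> \<mu> > 0 \<and>
    (\<forall>\<alpha>\<in>A. \<forall>\<gamma>\<in>A. \<alpha> \<noteq> \<gamma> \<longrightarrow> \<mu> \<le> (\<Sum>x\<in>Y. (\<alpha> \<bullet> x - \<alpha> \<bullet> x0 - (\<gamma> \<bullet> x - \<gamma> \<bullet> x0))\<^sup>2))"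
proof -
  define P where "P = {p\<in>A \<times> A. fst p \<noteq> snd p}"
  define diff where "diff p x = fst p \<bullet> x - fst p \<bullet> x0 - (snd p \<bullet> x - snd p \<bullet> x0)" for p x
  have "\<exists>x\<in>X. diff p x \<noteq> 0" if p: "p \<in> P" for p
  proof -
    have "fst p \<in> A" "snd p \<in> A" "fst p \<noteq> snd p" using p unfolding P_def by auto
    then obtain x where "x \<in> X" "(fst p - snd p) \<bullet> x \<noteq> (fst p - snd p) \<bullet> x0"
      using exp_lin_indep_separates[OF assms(1,2) _ _ _ assms(3)] by blast
    then have "diff p x \<noteq> 0" unfolding diff_def inner_diff_left by linarith
    with \<open>x \<in> X\<close> show ?thesis ..
  qed
  moreover have "finite P" unfolding P_def using assms(2) by simp
  ultimately obtain Y \<mu> where Y: "finite Y" "Y \<subseteq> X" "x0 \<in> Y" "\<mu> > 0"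
    and sep: "\<forall>p\<in>P. \<mu> \<le> (\<Sum>x\<in>Y. (diff p x)\<^sup>2)"
    using finite_sample_separating[of P X diff x0] assms(3) by blast
  have "\<mu> \<le> (\<Sum>x\<in>Y. (\<alpha> \<bullet> x - \<alpha> \<bullet> x0 - (\<gamma> \<bullet> x - \<gamma> \<bullet> x0))\<^sup>2)"
    if "\<alpha> \<in> A" "\<gamma> \<in> A" "\<alpha> \<noteq> \<gamma>" for \<alpha> \<gamma>
    using bspec[OF sep, of "(\<alpha>, \<gamma>)"] that unfolding P_def diff_def by simp
  with Y show ?thesis by blast
qed

lemma circuit_generators_dominated:
  assumes "X \<noteq> {}" "finite A" "exp_lin_indep X A"
  obtains \<epsilon> c0 w where "\<epsilon> > 0"
    "phi X A ` Lambda_X X A \<union> {((\<lambda>_. 0), 1)} \<subseteq> dominated_cone \<epsilon> c0 w A"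
proof -
  obtain x0 where "x0 \<in> X" using assms(1) by blast
  obtain Y \<mu> where Y: "finite Y" "Y \<subseteq> X" "x0 \<in> Y" and "\<mu> > 0"
    and sep: "\<forall>\<alpha>\<in>A. \<forall>\<gamma>\<in>A. \<alpha> \<noteq> \<gamma> \<longrightarrow>
      \<mu> \<le> (\<Sum>x\<in>Y. (\<alpha> \<bullet> x - \<alpha> \<bullet> x0 - (\<gamma> \<bullet> x - \<gamma> \<bullet> x0))\<^sup>2)"
    using exp_lin_indep_separating_sample[OF assms(3,2) \<open>x0 \<in> X\<close>] by blast
  define K where "K = 2 * (\<Sum>\<alpha>\<in>A. \<Sum>x\<in>Y. \<bar>\<alpha> \<bullet> x - \<alpha> \<bullet> x0\<bar>) * (1 + real (card Y)) + 1"
  define \<epsilon> where "\<epsilon> = min 1 (\<mu> / ((\<Sum>\<alpha>\<in>A. \<bar>\<alpha> \<bullet> x0\<bar>) + 2))"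
  define w where "w \<alpha> = K * (\<Sum>x\<in>Y. \<alpha> \<bullet> x) + (\<Sum>x\<in>Y. (\<alpha> \<bullet> x - \<alpha> \<bullet> x0)\<^sup>2)" for \<alpha>
  have "\<epsilon> > 0"
    unfolding \<epsilon>_def using \<open>\<mu> > 0\<close> by (simp add: sum_nonneg add_nonneg_pos)
  have "1 \<le> K" unfolding K_def by (simp add: sum_nonneg)
  moreover have "1 \<le> real (card Y)" using Y by (auto simp: Suc_le_eq card_gt_0_iff)
  ultimately have "1 \<le> K * real (card Y)" using mult_mono[of 1 K 1 "real (card Y)"] by simp
  then have "\<epsilon> \<le> K * real (card Y)" unfolding \<epsilon>_def by linarith
  then have "((\<lambda>_. 0), 1) \<in> dominated_cone \<epsilon> (K * real (card Y)) w A"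
    by (simp add: dominated_cone_def abs_sum_on_def lin_form_on_def)
  moreover have "phi X A l \<in> dominated_cone \<epsilon> (K * real (card Y)) w A" if "l \<in> Lambda_X X A" for l
  proof -
    obtain \<beta> where \<beta>: "normalized_weight A \<beta> l" and "sigA X A l < \<infinity>"
      and supp: "\<forall>\<alpha>. \<alpha> \<notin> A \<longrightarrow> l \<alpha> = 0"
      using \<open>l \<in> Lambda_X X A\<close> by (rule Lambda_X_normalized_weight)
    have "\<epsilon> * (\<bar>real_of_ereal (sigA X A l)\<bar> + (\<Sum>\<alpha>\<in>A. \<bar>l \<alpha>\<bar>))
      \<le> K * real (card Y) * real_of_ereal (sigA X A l) + (\<Sum>\<alpha>\<in>A. l \<alpha> * w \<alpha>)"
      unfolding K_def \<epsilon>_def w_def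
    proof (rule normalized_weight_dominated[where f = "\<lambda>\<alpha> x. \<alpha> \<bullet> x", OF assms(2) Y(1,3) \<beta> \<open>\<mu> > 0\<close>])
      show "0 \<le> real_of_ereal (sigA X A l) + (\<Sum>\<alpha>\<in>A. l \<alpha> * (\<alpha> \<bullet> x))" if "x \<in> Y" for x
        using sigA_ge_eval \<open>sigA X A l < \<infinity>\<close> that Y(2) by blast
      show "\<mu> \<le> (\<Sum>x\<in>Y. (\<alpha> \<bullet> x - \<alpha> \<bullet> x0 - (\<beta> \<bullet> x - \<beta> \<bullet> x0))\<^sup>2)" if "\<alpha> \<in> A" "\<alpha> \<noteq> \<beta>" for \<alpha>
        using \<beta> that by (intro sep[rule_format]) (auto simp: normalized_weight_def)
    qed
    with supp show ?thesis
      by (simp add: phi_def dominated_cone_def abs_sum_on_def lin_form_on_def)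
  qed
  ultimately show ?thesis
    using that[OF \<open>\<epsilon> > 0\<close>] by blast
qed

theorem lemma5p10:
  fixes X :: "(real^'n) set" and A :: "(real^'n) set"
  assumes "X \<noteq> {}" and "closed X" and "convex X"
    and "finite A" and "A \<noteq> {}"
    and "exp_lin_indep X A"
  shows "\<not> contains_line (closure (circuit_graph X A))"
proof
  obtain \<epsilon> c0 w where "\<epsilon> > 0"
    and gens: "phi X A ` Lambda_X X A \<union> {((\<lambda>_. 0), 1)} \<subseteq> dominated_cone \<epsilon> c0 w A"
    using circuit_generators_dominated[OF assms(1,4,6)] .
  have "circuit_graph X A \<subseteq> dominated_cone \<epsilon> c0 w A"
    unfolding circuit_graph_def using assms(4) \<open>\<epsilon> > 0\<close> gens by (simp add: cone_gen_subset_dominated_cone)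
  then have "closure (circuit_graph X A) \<subseteq> dominated_cone \<epsilon> c0 w A"
    using closed_dominated_cone[OF assms(4)] by (rule closure_minimal)
  moreover assume "contains_line (closure (circuit_graph X A))"
  ultimately show False
    using dominated_cone_no_line[OF assms(4) \<open>\<epsilon> > 0\<close>] contains_line_mono by blast
qed

end
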